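(* Let $H$ be a finitely realizable hypergroup and $N$ a normal sub-hypergroup of $H$. Then the quotient hypergroup $H/N$ is finitely realizable.
   Context: A hypergroup is a nonempty set $H$ with $*:H\times H\to P^*(H)$ (nonempty subsets), extended to subsets by $A*B=\bigcup_{a\in A,b\in B}a*b$, which is associative, has a unique identity $e$, unique inverses $h^{-1}$ with $e\in(h^{-1}*h)\cap(h*h^{-1})$, and is reversible ($c\in a*b\Rightarrow a\in c*b^{-1},\ b\in a^{-1}*c$). A sub-hypergroup $N$ is normal if $hN=Nh$ for all $h\in H$ (where $hN=\{h\}*N$). The quotient $H/N$ is the hypergroup on the set of cosets $\{hN:h\in H\}$ with $(aN)(bN)=\{cN: c\in aN*bN\}$. For a nonempty set $X$: $1_X$ is the diagonal, $p^*=\{(a,b):(b,a)\in p\}$, $xp=\{y:(x,y)\in p\}$. An association scheme on $X$ is a partition $S$ of $X\times X$ with $1_X\in S$, closed under $p\mapsto p^*$, such that for all $p,q,r\in S$ there is a cardinal $a_{pq}^r$ with $|yp\cap zq^*|=a_{pq}^r$ for all $y\in X$, $z\in yr$. $\mathbf{H}(S)$ is the hypergroup on $S$ with $p*q=\{r: a_{pq}^r\ge1\}$, identity $1_X$, inverse $p^*$. A hypergroup is finitely realizable if it is isomorphic to $\mathbf{H}(S)$ for some association scheme $S$ on a finite set $X$. *)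

theory Defs
  imports Main
begin

definition set_mult :: "('a \<Rightarrow> 'a \<Rightarrow> 'a set) \<Rightarrow> 'a set \<Rightarrow> 'a set \<Rightarrow> 'a set" where
  "set_mult m A B = (\<Union>a\<in>A. \<Union>b\<in>B. m a b)"

definition hypergroup ::
  "'a set \<Rightarrow> ('a \<Rightarrow> 'a \<Rightarrow> 'a set) \<Rightarrow> 'a \<Rightarrow> ('a \<Rightarrow> 'a) \<Rightarrow> bool" where
  "hypergroup H m e iv \<longleftrightarrow>
     H \<noteq> {} \<and>
     (\<forall>a\<in>H. \<forall>b\<in>H. m a b \<subseteq> H \<and> m a b \<noteq> {}) \<and>
     (\<forall>a\<in>H. \<forall>b\<in>H. \<forall>c\<in>H. set_mult m (m a b) {c} = set_mult m {a} (m b c)) \<and>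
     e \<in> H \<and> (\<forall>h\<in>H. m e h = {h} \<and> m h e = {h}) \<and>
     (\<forall>e'\<in>H. (\<forall>h\<in>H. m e' h = {h} \<and> m h e' = {h}) \<longrightarrow> e' = e) \<and>
     (\<forall>h\<in>H. iv h \<in> H \<and> e \<in> m (iv h) h \<inter> m h (iv h)) \<and>
     (\<forall>h\<in>H. \<forall>k\<in>H. e \<in> m k h \<inter> m h k \<longrightarrow> k = iv h) \<and>
     (\<forall>a\<in>H. \<forall>b\<in>H. \<forall>c\<in>H. c \<in> m a b \<longrightarrow> a \<in> m c (iv b) \<and> b \<in> m (iv a) c)"

definition sub_hypergroup ::
  "'a set \<Rightarrow> ('a \<Rightarrow> 'a \<Rightarrow> 'a set) \<Rightarrow> ('a \<Rightarrow> 'a) \<Rightarrow> 'a set \<Rightarrow> bool" where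
  "sub_hypergroup H m iv N \<longleftrightarrow>
     N \<subseteq> H \<and> N \<noteq> {} \<and> (\<forall>a\<in>N. \<forall>b\<in>N. m a b \<subseteq> N) \<and> (\<forall>a\<in>N. iv a \<in> N)"

definition normal_sub_hypergroup ::
  "'a set \<Rightarrow> ('a \<Rightarrow> 'a \<Rightarrow> 'a set) \<Rightarrow> ('a \<Rightarrow> 'a) \<Rightarrow> 'a set \<Rightarrow> bool" where
  "normal_sub_hypergroup H m iv N \<longleftrightarrow>
     sub_hypergroup H m iv N \<and> (\<forall>h\<in>H. set_mult m {h} N = set_mult m N {h})"

definition quot_carrier :: "'a set \<Rightarrow> ('a \<Rightarrow> 'a \<Rightarrow> 'a set) \<Rightarrow> 'a set \<Rightarrow> 'a set set" where
  "quot_carrier H m N = {set_mult m {h} N | h. h \<in> H}"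

definition quot_mult :: "('a \<Rightarrow> 'a \<Rightarrow> 'a set) \<Rightarrow> 'a set \<Rightarrow> 'a set \<Rightarrow> 'a set \<Rightarrow> 'a set set" where
  "quot_mult m N A B = {set_mult m {c} N | c. c \<in> set_mult m A B}"

text \<open>Association schemes on a finite set X (finite sets are represented inside nat).\<close>
definition assoc_scheme :: "'x set \<Rightarrow> ('x \<times> 'x) set set \<Rightarrow> bool" where
  "assoc_scheme X S \<longleftrightarrow>
     {} \<notin> S \<and> \<Union>S = X \<times> X \<and> (\<forall>p\<in>S. \<forall>q\<in>S. p \<noteq> q \<longrightarrow> p \<inter> q = {}) \<and>
     Id_on X \<in> S \<and> (\<forall>p\<in>S. converse p \<in> S) \<and>
     (\<forall>p\<in>S. \<forall>q\<in>S. \<forall>r\<in>S. \<exists>a::nat. \<forall>y\<in>X. \<forall>z. (y, z) \<in> r \<longrightarrow>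
         card ({w. (y, w) \<in> p} \<inter> {w. (z, w) \<in> converse q}) = a)"

definition int_number :: "'x set \<Rightarrow> ('x \<times> 'x) set \<Rightarrow> ('x \<times> 'x) set \<Rightarrow> ('x \<times> 'x) set \<Rightarrow> nat" where
  "int_number X p q r = (THE a. \<forall>y\<in>X. \<forall>z. (y, z) \<in> r \<longrightarrow>
         card ({w. (y, w) \<in> p} \<inter> {w. (z, w) \<in> converse q}) = a)"

definition scheme_mult :: "'x set \<Rightarrow> ('x \<times> 'x) set set \<Rightarrow> ('x \<times> 'x) set \<Rightarrow> ('x \<times> 'x) set \<Rightarrow> ('x \<times> 'x) set set" where
  "scheme_mult X S p q = {r\<in>S. int_number X p q r \<ge> 1}"

definition hg_iso :: "'a set \<Rightarrow> ('a \<Rightarrow> 'a \<Rightarrow> 'a set) \<Rightarrow> 'b set \<Rightarrow> ('b \<Rightarrow> 'b \<Rightarrow> 'b set) \<Rightarrow> ('a \<Rightarrow> 'b) \<Rightarrow> bool" where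
  "hg_iso H m K m' f \<longleftrightarrow> bij_betw f H K \<and> (\<forall>a\<in>H. \<forall>b\<in>H. f ` (m a b) = m' (f a) (f b))"

definition finitely_realizable :: "'a set \<Rightarrow> ('a \<Rightarrow> 'a \<Rightarrow> 'a set) \<Rightarrow> bool" where
  "finitely_realizable H m \<longleftrightarrow>
     (\<exists>(X::nat set) S f. finite X \<and> X \<noteq> {} \<and> assoc_scheme X S \<and> hg_iso H m S (scheme_mult X S) f)"

end

theory Submission
  imports Defs
begin

text \<open>
  Pull the scheme back along the isomorphism: each pair of points x, y gets a label
  \<open>rho x y \<in> H\<close>, with \<open>rho x z \<in> rho x y * rho y z\<close>, and the number of
  middle points y with prescribed labels depends only on \<open>rho x z\<close>.  As N is closed,
  \<open>rho x y \<in> N\<close> is an equivalence on the points, and all its blocks have the same size.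
  On a set of block representatives, the relations \<open>rho u v \<in> A\<close>, A a coset of N,
  form an association scheme: counting middle points in X instead of among the
  representatives multiplies every count by the block size, so the counts are again
  constant, and they are positive exactly when \<open>rho u v \<in> A * B\<close>.  That makes
  A \<mapsto> its relation an isomorphism from H/N onto the new scheme.
\<close>

lemma set_mult_iff: "x \<in> set_mult m A B \<longleftrightarrow> (\<exists>a\<in>A. \<exists>b\<in>B. x \<in> m a b)"
  by (auto simp: set_mult_def)

lemma set_mult_mono: "A \<subseteq> A' \<Longrightarrow> B \<subseteq> B' \<Longrightarrow> set_mult m A B \<subseteq> set_mult m A' B'"
  by (auto simp: set_mult_def)

locale hyper_group =
  fixes H :: "'a set" and m :: "'a \<Rightarrow> 'a \<Rightarrow> 'a set" and e :: 'a and iv :: "'a \<Rightarrow> 'a"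
  assumes hypergroup: "hypergroup H m e iv"
begin

lemma mult_closed: "a \<in> H \<Longrightarrow> b \<in> H \<Longrightarrow> m a b \<subseteq> H"
  using hypergroup by (auto simp: hypergroup_def)

lemma mult_assoc: "a \<in> H \<Longrightarrow> b \<in> H \<Longrightarrow> c \<in> H \<Longrightarrow> set_mult m (m a b) {c} = set_mult m {a} (m b c)"
  using hypergroup by (auto simp: hypergroup_def)

lemma unit_closed: "e \<in> H"
  using hypergroup by (auto simp: hypergroup_def)

lemma unit_mult: "h \<in> H \<Longrightarrow> m e h = {h} \<and> m h e = {h}"
  using hypergroup by (auto simp: hypergroup_def)

lemma unit_unique:
  assumes "e' \<in> H" "\<And>h. h \<in> H \<Longrightarrow> m e' h = {h} \<and> m h e' = {h}"
  shows "e' = e"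
proof -
  have "\<forall>e'\<in>H. (\<forall>h\<in>H. m e' h = {h} \<and> m h e' = {h}) \<longrightarrow> e' = e"
    using hypergroup unfolding hypergroup_def by (elim conjE) assumption
  then show ?thesis using assms by blast
qed

lemma inv_closed: "h \<in> H \<Longrightarrow> iv h \<in> H"
  using hypergroup by (auto simp: hypergroup_def)

lemma unit_in_inv_mult: "h \<in> H \<Longrightarrow> e \<in> m (iv h) h \<and> e \<in> m h (iv h)"
  using hypergroup by (auto simp: hypergroup_def)

lemma inv_unique:
  assumes "h \<in> H" "k \<in> H" "e \<in> m k h" "e \<in> m h k"
  shows "k = iv h"
proof -
  have "\<forall>h\<in>H. \<forall>k\<in>H. e \<in> m k h \<inter> m h k \<longrightarrow> k = iv h"
    using hypergroup unfolding hypergroup_def by (elim conjE) assumption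
  then show ?thesis using assms by blast
qed

lemma reversible:
  assumes "a \<in> H" "b \<in> H" "c \<in> m a b"
  shows "a \<in> m c (iv b)" "b \<in> m (iv a) c"
proof -
  have "\<forall>a\<in>H. \<forall>b\<in>H. \<forall>c\<in>H. c \<in> m a b \<longrightarrow> a \<in> m c (iv b) \<and> b \<in> m (iv a) c"
    using hypergroup unfolding hypergroup_def by (elim conjE) assumption
  then show "a \<in> m c (iv b)" "b \<in> m (iv a) c" using assms mult_closed by blast+
qed

lemma inv_inv: "h \<in> H \<Longrightarrow> iv (iv h) = h"
  using inv_unique[of "iv h" h] unit_in_inv_mult[of h] inv_closed[of h] by auto

lemma inv_mult_rev:
  assumes a: "a \<in> H" and b: "b \<in> H" and c: "c \<in> m a b"
  shows "iv c \<in> m (iv b) (iv a)"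
proof -
  have cH: "c \<in> H" using mult_closed a b c by blast
  have "b \<in> m (iv a) c" using reversible(2)[OF a b c] .
  then have "iv a \<in> m b (iv c)" by (rule reversible(1)[OF inv_closed[OF a] cH])
  then show ?thesis by (rule reversible(2)[OF b inv_closed[OF cH]])
qed

lemma set_mult_closed: "A \<subseteq> H \<Longrightarrow> B \<subseteq> H \<Longrightarrow> set_mult m A B \<subseteq> H"
  unfolding set_mult_def using mult_closed by blast

lemma set_mult_assoc:
  assumes "A \<subseteq> H" "B \<subseteq> H" "C \<subseteq> H"
  shows "set_mult m (set_mult m A B) C = set_mult m A (set_mult m B C)"
proof (rule set_eqI)
  fix x
  have "(\<exists>d\<in>m a b. x \<in> m d c) \<longleftrightarrow> (\<exists>d\<in>m b c. x \<in> m a d)"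
    if "a \<in> A" "b \<in> B" "c \<in> C" for a b c
    using mult_assoc[of a b c] assms that by (auto simp: set_mult_iff set_eq_iff)
  moreover have "x \<in> set_mult m (set_mult m A B) C \<longleftrightarrow>
      (\<exists>a\<in>A. \<exists>b\<in>B. \<exists>c\<in>C. \<exists>d\<in>m a b. x \<in> m d c)"
    by (auto simp: set_mult_def)
  moreover have "x \<in> set_mult m A (set_mult m B C) \<longleftrightarrow>
      (\<exists>a\<in>A. \<exists>b\<in>B. \<exists>c\<in>C. \<exists>d\<in>m b c. x \<in> m a d)"
    by (auto simp: set_mult_def)
  ultimately show "x \<in> set_mult m (set_mult m A B) C \<longleftrightarrow> x \<in> set_mult m A (set_mult m B C)"
    by blast
qed

end

locale normal_subhypergroup = hyper_group +
  fixes N :: "'a set"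
  assumes normal: "normal_sub_hypergroup H m iv N"
begin

abbreviation coset :: "'a \<Rightarrow> 'a set" where
  "coset h \<equiv> set_mult m {h} N"

lemma sub_carrier: "N \<subseteq> H"
  using normal by (auto simp: normal_sub_hypergroup_def sub_hypergroup_def)

lemma sub_mult_closed: "a \<in> N \<Longrightarrow> b \<in> N \<Longrightarrow> m a b \<subseteq> N"
  using normal by (auto simp: normal_sub_hypergroup_def sub_hypergroup_def)

lemma sub_inv_closed: "a \<in> N \<Longrightarrow> iv a \<in> N"
  using normal by (auto simp: normal_sub_hypergroup_def sub_hypergroup_def)

lemma left_coset_eq_right_coset: "h \<in> H \<Longrightarrow> coset h = set_mult m N {h}"
  using normal by (auto simp: normal_sub_hypergroup_def)

lemma unit_in_sub: "e \<in> N"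
proof -
  obtain n where n: "n \<in> N"
    using normal by (auto simp: normal_sub_hypergroup_def sub_hypergroup_def)
  then show ?thesis
    using sub_mult_closed[of n "iv n"] sub_inv_closed unit_in_inv_mult sub_carrier by blast
qed

lemma in_coset: "h \<in> H \<Longrightarrow> h \<in> coset h"
  using unit_mult[of h] unit_in_sub by (auto simp: set_mult_iff)

lemma coset_subset: "h \<in> H \<Longrightarrow> coset h \<subseteq> H"
  using set_mult_closed sub_carrier by auto

lemma coset_unit: "coset e = N"
  using unit_mult sub_carrier by (auto simp: set_mult_def)

lemma coset_mult_sub: "h \<in> H \<Longrightarrow> set_mult m (coset h) N \<subseteq> coset h"
proof -
  assume h: "h \<in> H"
  have "set_mult m N N \<subseteq> N"
    unfolding set_mult_def using sub_mult_closed by blast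
  then show ?thesis
    using set_mult_assoc[of "{h}" N N] h sub_carrier set_mult_mono[of "{h}" "{h}"] by blast
qed

lemma sub_mult_coset: "h \<in> H \<Longrightarrow> set_mult m N (coset h) \<subseteq> coset h"
proof -
  assume h: "h \<in> H"
  have "set_mult m N (coset h) = set_mult m (set_mult m N {h}) N"
    using set_mult_assoc[of N "{h}" N] sub_carrier h by auto
  also have "\<dots> = set_mult m (coset h) N"
    using left_coset_eq_right_coset h by simp
  finally show ?thesis using coset_mult_sub h by simp
qed

lemma coset_eq:
  assumes h: "h \<in> H" and c: "c \<in> coset h"
  shows "coset c = coset h"
proof
  obtain n where n: "n \<in> N" "c \<in> m h n" using c by (auto simp: set_mult_iff)
  have cH: "c \<in> H" using c coset_subset h by blast
  show "coset c \<subseteq> coset h"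
    using set_mult_mono[of "{c}" "coset h" N N m] c coset_mult_sub[OF h] by blast
  have "h \<in> m c (iv n)" using reversible(1)[of h n c] n h sub_carrier by blast
  then have "h \<in> coset c" using sub_inv_closed n by (auto simp: set_mult_iff)
  then show "coset h \<subseteq> coset c"
    using set_mult_mono[of "{h}" "coset c" N N m] coset_mult_sub[OF cH] by blast
qed

lemma coset_right_mult_closed:
  "h \<in> H \<Longrightarrow> a \<in> coset h \<Longrightarrow> n \<in> N \<Longrightarrow> m a n \<subseteq> coset h"
  using coset_mult_sub[of h] set_mult_iff[of _ m "coset h" N] by blast

lemma coset_left_mult_closed:
  "h \<in> H \<Longrightarrow> a \<in> coset h \<Longrightarrow> n \<in> N \<Longrightarrow> m n a \<subseteq> coset h"
  using sub_mult_coset[of h] set_mult_iff[of _ m N "coset h"] by blast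

lemma inv_coset:
  assumes a: "a \<in> H" and x: "x \<in> coset a"
  shows "iv x \<in> coset (iv a)"
proof -
  obtain n where n: "n \<in> N" "x \<in> m a n" using x by (auto simp: set_mult_iff)
  then have "iv x \<in> m (iv n) (iv a)" using inv_mult_rev a sub_carrier by blast
  then have "iv x \<in> set_mult m N {iv a}" using sub_inv_closed n by (auto simp: set_mult_iff)
  then show ?thesis using left_coset_eq_right_coset inv_closed a by auto
qed

lemma inv_coset_iff:
  assumes a: "a \<in> H" and x: "x \<in> H"
  shows "iv x \<in> coset (iv a) \<longleftrightarrow> x \<in> coset a"
proof
  assume "iv x \<in> coset (iv a)"
  then have "iv (iv x) \<in> coset (iv (iv a))" using inv_coset inv_closed a by blast
  then show "x \<in> coset a" using inv_inv a x by simp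
qed (rule inv_coset[OF a])

end

lemma assoc_scheme_partition:
  assumes "assoc_scheme X S"
  shows "{} \<notin> S" "\<Union>S = X \<times> X" "\<forall>p\<in>S. \<forall>q\<in>S. p \<noteq> q \<longrightarrow> p \<inter> q = {}"
proof -
  from assms have "{} \<notin> S \<and> \<Union>S = X \<times> X \<and> (\<forall>p\<in>S. \<forall>q\<in>S. p \<noteq> q \<longrightarrow> p \<inter> q = {})"
    unfolding assoc_scheme_def by (elim conjE) (intro conjI; assumption)
  then show "{} \<notin> S" "\<Union>S = X \<times> X" "\<forall>p\<in>S. \<forall>q\<in>S. p \<noteq> q \<longrightarrow> p \<inter> q = {}"
    by blast+
qed

lemma assoc_scheme_subset: "assoc_scheme X S \<Longrightarrow> p \<in> S \<Longrightarrow> p \<subseteq> X \<times> X"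
  using assoc_scheme_partition(2) by blast

lemma assoc_scheme_nonempty: "assoc_scheme X S \<Longrightarrow> p \<in> S \<Longrightarrow> p \<noteq> {}"
  using assoc_scheme_partition(1) by blast

lemma assoc_scheme_diag: "assoc_scheme X S \<Longrightarrow> Id_on X \<in> S"
  unfolding assoc_scheme_def by (elim conjE)

lemma assoc_scheme_disjoint:
  "assoc_scheme X S \<Longrightarrow> p \<in> S \<Longrightarrow> q \<in> S \<Longrightarrow> x \<in> p \<Longrightarrow> x \<in> q \<Longrightarrow> p = q"
  using assoc_scheme_partition(3) by blast

lemma assoc_scheme_cover: "assoc_scheme X S \<Longrightarrow> x \<in> X \<Longrightarrow> y \<in> X \<Longrightarrow> \<exists>p\<in>S. (x, y) \<in> p"
  using assoc_scheme_partition(2) by blast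

lemma finite_assoc_scheme: "assoc_scheme X S \<Longrightarrow> finite X \<Longrightarrow> finite S"
  using finite_subset[of S "Pow (X \<times> X)"] assoc_scheme_subset by blast

lemma int_number_eqI:
  assumes a: "\<forall>y\<in>X. \<forall>z. (y, z) \<in> r \<longrightarrow> card ({w. (y, w) \<in> p} \<inter> {w. (z, w) \<in> converse q}) = a"
    and y: "y \<in> X" and yz: "(y, z) \<in> r"
  shows "int_number X p q r = card ({w. (y, w) \<in> p} \<inter> {w. (z, w) \<in> converse q})"
proof -
  have "int_number X p q r = a"
    unfolding int_number_def
  proof (rule the_equality)
    fix a' assume "\<forall>y\<in>X. \<forall>z. (y, z) \<in> r \<longrightarrow>
         card ({w. (y, w) \<in> p} \<inter> {w. (z, w) \<in> converse q}) = a'"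
    then show "a' = a" using a y yz by metis
  qed (use a in blast)
  then show ?thesis using a y yz by metis
qed

lemma assoc_scheme_regular:
  assumes "assoc_scheme X S" "p \<in> S" "q \<in> S" "r \<in> S"
  shows "\<exists>a::nat. \<forall>y\<in>X. \<forall>z. (y, z) \<in> r \<longrightarrow>
           card ({w. (y, w) \<in> p} \<inter> {w. (z, w) \<in> converse q}) = a"
proof -
  have "\<forall>p\<in>S. \<forall>q\<in>S. \<forall>r\<in>S. \<exists>a::nat. \<forall>y\<in>X. \<forall>z. (y, z) \<in> r \<longrightarrow>
      card ({w. (y, w) \<in> p} \<inter> {w. (z, w) \<in> converse q}) = a"
    using assms(1) unfolding assoc_scheme_def by (elim conjE) assumption
  then show ?thesis using assms(2-4) by (elim ballE) auto
qed

lemma assoc_scheme_int_number: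
  assumes "assoc_scheme X S" "p \<in> S" "q \<in> S" "r \<in> S" "y \<in> X" "(y, z) \<in> r"
  shows "int_number X p q r = card ({w. (y, w) \<in> p} \<inter> {w. (z, w) \<in> converse q})"
  using assoc_scheme_regular[OF assms(1-4)] int_number_eqI[OF _ assms(5,6)] by (elim exE)

locale realized_hypergroup = hyper_group +
  fixes X :: "'x set" and S :: "('x \<times> 'x) set set" and f :: "'a \<Rightarrow> ('x \<times> 'x) set"
  assumes finite_X: "finite X"
    and scheme: "assoc_scheme X S"
    and iso: "hg_iso H m S (scheme_mult X S) f"
begin

lemma f_bij: "bij_betw f H S"
  using iso by (simp add: hg_iso_def)

lemma f_mult: "a \<in> H \<Longrightarrow> b \<in> H \<Longrightarrow> f ` m a b = scheme_mult X S (f a) (f b)"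
  using iso by (auto simp: hg_iso_def)

lemma f_in: "h \<in> H \<Longrightarrow> f h \<in> S"
  using bij_betw_apply[OF f_bij] .

lemma f_inj: "h \<in> H \<Longrightarrow> k \<in> H \<Longrightarrow> f h = f k \<Longrightarrow> h = k"
  using f_bij unfolding bij_betw_def inj_on_def by blast

lemma f_surj: "p \<in> S \<Longrightarrow> \<exists>h\<in>H. f h = p"
  using f_bij unfolding bij_betw_def by blast

lemma finite_carrier: "finite H"
  using bij_betw_finite[OF f_bij] finite_assoc_scheme[OF scheme finite_X] by simp

definition rho :: "'x \<Rightarrow> 'x \<Rightarrow> 'a" where
  "rho x y = (THE h. h \<in> H \<and> (x, y) \<in> f h)"

lemma rho_eqI:
  assumes h: "h \<in> H" and xy: "(x, y) \<in> f h"
  shows "rho x y = h"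
  unfolding rho_def
proof (rule the_equality)
  fix k assume k: "k \<in> H \<and> (x, y) \<in> f k"
  then show "k = h"
    using assoc_scheme_disjoint[OF scheme f_in f_in] f_inj h xy by blast
qed (use h xy in blast)

lemma rho_mem: assumes "x \<in> X" "y \<in> X" shows "rho x y \<in> H" "(x, y) \<in> f (rho x y)"
proof -
  obtain h where "h \<in> H" "(x, y) \<in> f h"
    using assoc_scheme_cover[OF scheme assms] f_surj by blast
  then show "rho x y \<in> H" "(x, y) \<in> f (rho x y)" using rho_eqI by auto
qed

lemma rho_surj: "h \<in> H \<Longrightarrow> \<exists>x\<in>X. \<exists>y\<in>X. rho x y = h"
proof -
  assume h: "h \<in> H"
  then obtain x y where "(x, y) \<in> f h"
    using assoc_scheme_nonempty[OF scheme f_in] by fastforce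
  then show ?thesis using rho_eqI h assoc_scheme_subset[OF scheme f_in[OF h]] by blast
qed

lemma X_nonempty: "X \<noteq> {}"
  using rho_surj unit_closed by blast

lemma int_number_rho:
  assumes a: "a \<in> H" and b: "b \<in> H" and x: "x \<in> X" and z: "z \<in> X"
  shows "int_number X (f a) (f b) (f (rho x z)) = card {y\<in>X. rho x y = a \<and> rho y z = b}"
proof -
  have "int_number X (f a) (f b) (f (rho x z))
      = card ({w. (x, w) \<in> f a} \<inter> {w. (z, w) \<in> converse (f b)})"
    using assoc_scheme_int_number[OF scheme] f_in a b rho_mem x z by blast
  also have "{w. (x, w) \<in> f a} \<inter> {w. (z, w) \<in> converse (f b)}
      = {y\<in>X. rho x y = a \<and> rho y z = b}"
    using rho_eqI rho_mem x z a b assoc_scheme_subset[OF scheme f_in[OF a]] by blast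
  finally show ?thesis .
qed

lemma rho_mult:
  assumes x: "x \<in> X" and y: "y \<in> X" and z: "z \<in> X"
  shows "rho x z \<in> m (rho x y) (rho y z)"
proof -
  let ?a = "rho x y" and ?b = "rho y z" and ?c = "rho x z"
  have H: "?a \<in> H" "?b \<in> H" "?c \<in> H" using rho_mem x y z by auto
  have "{w\<in>X. rho x w = ?a \<and> rho w z = ?b} \<noteq> {}" using y by blast
  then have "card {w\<in>X. rho x w = ?a \<and> rho w z = ?b} \<ge> 1"
    using finite_X by (simp add: Suc_le_eq card_gt_0_iff)
  then have "f ?c \<in> scheme_mult X S (f ?a) (f ?b)"
    using int_number_rho H x z f_in by (auto simp: scheme_mult_def)
  then have "f ?c \<in> f ` m ?a ?b" using f_mult H by simp
  then obtain d where "d \<in> m ?a ?b" "f d = f ?c" by blast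
  then show ?thesis using f_inj mult_closed H by blast
qed

lemma rho_factor:
  assumes a: "a \<in> H" and b: "b \<in> H" and c: "rho x z \<in> m a b" and x: "x \<in> X" and z: "z \<in> X"
  obtains y where "y \<in> X" "rho x y = a" "rho y z = b"
proof -
  have "f (rho x z) \<in> scheme_mult X S (f a) (f b)" using f_mult a b c by auto
  then have "card {y\<in>X. rho x y = a \<and> rho y z = b} \<ge> 1"
    using int_number_rho a b x z by (auto simp: scheme_mult_def)
  then have "{y\<in>X. rho x y = a \<and> rho y z = b} \<noteq> {}" by (metis card.empty not_one_le_zero)
  then show ?thesis using that by blast
qed

lemma card_factorizations_eq:
  assumes "a \<in> H" "b \<in> H" "x \<in> X" "z \<in> X" "x' \<in> X" "z' \<in> X" "rho x z = rho x' z'"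
  shows "card {y\<in>X. rho x y = a \<and> rho y z = b} = card {y\<in>X. rho x' y = a \<and> rho y z' = b}"
  using int_number_rho[of a b x z, symmetric] int_number_rho[of a b x' z'] assms by argo

lemma rho_diag: assumes x: "x \<in> X" shows "rho x x = e"
proof -
  obtain i where i: "i \<in> H" "f i = Id_on X"
    using f_surj[OF assoc_scheme_diag[OF scheme]] by blast
  have rho_i: "rho u v = i \<longleftrightarrow> u = v" if uv: "u \<in> X" "v \<in> X" for u v
  proof
    assume "rho u v = i"
    then show "u = v" using rho_mem(2)[OF uv] i(2) by auto
  next
    assume "u = v"
    then show "rho u v = i" using rho_eqI[OF i(1)] i(2) uv by auto
  qed
  have "m i h = {h} \<and> m h i = {h}" if h: "h \<in> H" for h
  proof -
    obtain u v where uv: "u \<in> X" "v \<in> X" "rho u v = h" using rho_surj h by blast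
    have "h \<in> m i h" "h \<in> m h i"
      using rho_mult[of u u v] rho_mult[of u v v] uv rho_i by auto
    moreover have "c = h" if c: "c \<in> m i h" for c
    proof -
      obtain p q where pq: "p \<in> X" "q \<in> X" "rho p q = c"
        using rho_surj c mult_closed i h by blast
      obtain y where "y \<in> X" "rho p y = i" "rho y q = h"
        using rho_factor[OF i(1) h _ pq(1,2)] c pq(3) by blast
      then show ?thesis using rho_i pq by auto
    qed
    moreover have "c = h" if c: "c \<in> m h i" for c
    proof -
      obtain p q where pq: "p \<in> X" "q \<in> X" "rho p q = c"
        using rho_surj c mult_closed i h by blast
      obtain y where "y \<in> X" "rho p y = h" "rho y q = i"
        using rho_factor[OF h i(1) _ pq(1,2)] c pq(3) by blast
      then show ?thesis using rho_i pq by auto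
    qed
    ultimately show ?thesis by blast
  qed
  txt \<open>The preimage of the diagonal relation is a two-sided unit, hence it is e.\<close>
  then have "i = e" using unit_unique i(1) by blast
  then show ?thesis using rho_i x by auto
qed

lemma rho_swap:
  assumes x: "x \<in> X" and y: "y \<in> X"
  shows "rho y x = iv (rho x y)"
proof (rule inv_unique)
  show "e \<in> m (rho y x) (rho x y)" using rho_mult[OF y x y] rho_diag[OF y] by simp
  show "e \<in> m (rho x y) (rho y x)" using rho_mult[OF x y x] rho_diag[OF x] by simp
qed (use rho_mem x y in auto)

end

locale realized_quotient = realized_hypergroup + normal_subhypergroup
begin

abbreviation Q :: "'a set set" where
  "Q \<equiv> quot_carrier H m N"

lemma rho_sub_refl: "x \<in> X \<Longrightarrow> rho x x \<in> N"
  using rho_diag unit_in_sub by simp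

lemma rho_sub_sym: "x \<in> X \<Longrightarrow> y \<in> X \<Longrightarrow> rho x y \<in> N \<Longrightarrow> rho y x \<in> N"
  using rho_swap[of x y] sub_inv_closed by simp

lemma rho_sub_trans:
  "x \<in> X \<Longrightarrow> y \<in> X \<Longrightarrow> z \<in> X \<Longrightarrow> rho x y \<in> N \<Longrightarrow> rho y z \<in> N \<Longrightarrow> rho x z \<in> N"
  using rho_mult sub_mult_closed by blast

text \<open>The quotient scheme lives on one representative of each block; \<open>coset_rel A\<close> is
  the relation it assigns to the coset A.\<close>

definition block where
  "block x = {y\<in>X. rho x y \<in> N}"

definition rep where
  "rep x = (SOME y. y \<in> block x)"

definition Xq where
  "Xq = rep ` X"

definition coset_rel where
  "coset_rel A = {(u, v). u \<in> Xq \<and> v \<in> Xq \<and> rho u v \<in> A}"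

definition Sq where
  "Sq = coset_rel ` Q"

lemma block_eq:
  assumes x: "x \<in> X" and y: "y \<in> X" and xy: "rho x y \<in> N"
  shows "block x = block y"
  unfolding block_def
  using rho_sub_trans[OF y x _ rho_sub_sym[OF x y xy]] rho_sub_trans[OF x y _ xy] by blast

lemma finite_block: "finite (block x)"
  unfolding block_def using finite_X by simp

lemma rep_in_block: "x \<in> X \<Longrightarrow> rep x \<in> block x"
  unfolding rep_def by (rule someI[of _ x]) (simp add: block_def rho_sub_refl)

lemma rep_in: "x \<in> X \<Longrightarrow> rep x \<in> X"
  using rep_in_block unfolding block_def by blast

lemma rho_to_rep: "x \<in> X \<Longrightarrow> rho x (rep x) \<in> N"
  using rep_in_block unfolding block_def by blast

lemma rho_from_rep: "x \<in> X \<Longrightarrow> rho (rep x) x \<in> N"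
  using rho_sub_sym rep_in rho_to_rep by blast

lemma rep_eq: "x \<in> X \<Longrightarrow> y \<in> X \<Longrightarrow> rho x y \<in> N \<Longrightarrow> rep x = rep y"
  unfolding rep_def using block_eq by simp

lemma Xq_subset: "Xq \<subseteq> X"
  unfolding Xq_def using rep_in by blast

lemma rep_idem: "u \<in> Xq \<Longrightarrow> rep u = u"
proof -
  assume "u \<in> Xq"
  then obtain x where x: "x \<in> X" "u = rep x" unfolding Xq_def by blast
  then show "rep u = u" using rep_eq[OF rep_in[OF x(1)] x(1) rho_from_rep[OF x(1)]] by simp
qed

lemma Xq_eq_if_sub: "u \<in> Xq \<Longrightarrow> v \<in> Xq \<Longrightarrow> rho u v \<in> N \<Longrightarrow> u = v"
  using rep_eq[of u v] rep_idem Xq_subset by auto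

lemma block_disjoint:
  assumes w: "w1 \<in> Xq" "w2 \<in> Xq" "w1 \<noteq> w2"
  shows "block w1 \<inter> block w2 = {}"
proof (rule ccontr)
  assume "block w1 \<inter> block w2 \<noteq> {}"
  then obtain z where z: "z \<in> X" "rho w1 z \<in> N" "rho w2 z \<in> N" unfolding block_def by auto
  have "rho w1 w2 \<in> N"
    using rho_sub_trans[OF _ z(1) _ z(2) rho_sub_sym[OF _ z(1) z(3)]] w Xq_subset by blast
  then show False using Xq_eq_if_sub w by blast
qed

lemma finite_Xq: "finite Xq"
  using Xq_subset finite_X finite_subset by blast

lemma Xq_nonempty: "Xq \<noteq> {}"
  using X_nonempty Xq_def by auto

lemma quot_carrierE: "A \<in> Q \<Longrightarrow> (\<And>h. h \<in> H \<Longrightarrow> A = coset h \<Longrightarrow> thesis) \<Longrightarrow> thesis"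
  unfolding quot_carrier_def by blast

lemma quot_carrierI: "h \<in> H \<Longrightarrow> coset h \<in> Q"
  unfolding quot_carrier_def by blast

lemma quot_carrier_subset: "A \<in> Q \<Longrightarrow> A \<subseteq> H"
  using coset_subset by (elim quot_carrierE) simp

lemma quot_carrier_eq_coset: "A \<in> Q \<Longrightarrow> a \<in> A \<Longrightarrow> A = coset a"
  using coset_eq by (elim quot_carrierE) simp

lemma sub_in_quot_carrier: "N \<in> Q"
  using quot_carrierI[OF unit_closed] coset_unit by simp

lemma rho_coset_right:
  assumes "A \<in> Q" "x \<in> X" "y \<in> X" "y' \<in> X" "rho x y \<in> A" "rho y y' \<in> N"
  shows "rho x y' \<in> A"
  using assms(1)
proof (rule quot_carrierE)
  fix h assume "h \<in> H" "A = coset h"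
  then show ?thesis using coset_right_mult_closed rho_mult assms(2-) by blast
qed

lemma rho_coset_left:
  assumes "A \<in> Q" "x \<in> X" "y \<in> X" "x' \<in> X" "rho x y \<in> A" "rho x' x \<in> N"
  shows "rho x' y \<in> A"
  using assms(1)
proof (rule quot_carrierE)
  fix h assume "h \<in> H" "A = coset h"
  then show ?thesis using coset_left_mult_closed rho_mult assms(2-) by blast
qed

definition paths where
  "paths A B x y = card {w\<in>X. rho x w \<in> A \<and> rho w y \<in> B}"

definition rep_paths where
  "rep_paths A B x y = card {w\<in>Xq. rho x w \<in> A \<and> rho w y \<in> B}"

lemma paths_sum:
  assumes "A \<subseteq> H" "B \<subseteq> H"
  shows "paths A B x y = (\<Sum>ab\<in>A \<times> B. card {w\<in>X. rho x w = fst ab \<and> rho w y = snd ab})"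
proof -
  have fin: "finite (A \<times> B)" using assms finite_carrier finite_subset by blast
  have "{w\<in>X. rho x w \<in> A \<and> rho w y \<in> B}
      = (\<Union>ab\<in>A \<times> B. {w\<in>X. rho x w = fst ab \<and> rho w y = snd ab})"
    by auto
  also have "card \<dots> = (\<Sum>ab\<in>A \<times> B. card {w\<in>X. rho x w = fst ab \<and> rho w y = snd ab})"
    by (rule card_UN_disjoint) (use fin finite_X in auto)
  finally show ?thesis unfolding paths_def .
qed

lemma paths_eq_if_rho_eq:
  assumes "A \<subseteq> H" "B \<subseteq> H" "x \<in> X" "y \<in> X" "x' \<in> X" "y' \<in> X" "rho x y = rho x' y'"
  shows "paths A B x y = paths A B x' y'"
  unfolding paths_sum[OF assms(1,2)]
proof (rule sum.cong[OF refl])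
  fix ab assume "ab \<in> A \<times> B"
  then have "fst ab \<in> H" "snd ab \<in> H" using assms(1,2) by auto
  then show "card {w\<in>X. rho x w = fst ab \<and> rho w y = snd ab}
      = card {w\<in>X. rho x' w = fst ab \<and> rho w y' = snd ab}"
    using card_factorizations_eq assms(3-) by blast
qed

lemma paths_eq_if_sub_right:
  assumes "B \<in> Q" "y \<in> X" "y' \<in> X" "rho y y' \<in> N"
  shows "paths A B x y = paths A B x y'"
proof -
  have "{w\<in>X. rho x w \<in> A \<and> rho w y \<in> B} = {w\<in>X. rho x w \<in> A \<and> rho w y' \<in> B}"
    using rho_coset_right[OF assms(1) _ assms(2,3) _ assms(4)]
      rho_coset_right[OF assms(1) _ assms(3,2) _ rho_sub_sym[OF assms(2-4)]] by blast
  then show ?thesis unfolding paths_def by simp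
qed

lemma paths_eq_if_same_coset:
  assumes A: "A \<in> Q" and B: "B \<in> Q" and C: "C \<in> Q"
    and x: "x \<in> X" and y: "y \<in> X" and x': "x' \<in> X" and y': "y' \<in> X"
    and c: "rho x y \<in> C" and c': "rho x' y' \<in> C"
  shows "paths A B x y = paths A B x' y'"
proof -
  let ?c = "rho x y" and ?c' = "rho x' y'"
  txt \<open>Move y within its block to a point y'' with \<open>rho x y'' = ?c'\<close>.\<close>
  have cH: "?c \<in> H" "?c' \<in> H" using rho_mem x y x' y' by auto
  have "?c' \<in> coset ?c" using quot_carrier_eq_coset[OF C c] c' by simp
  then obtain n where n: "n \<in> N" "?c' \<in> m ?c n" by (auto simp: set_mult_iff)
  have "?c \<in> m ?c' (iv n)" using reversible(1)[of ?c n ?c'] n cH sub_carrier by blast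
  then obtain y'' where y'': "y'' \<in> X" "rho x y'' = ?c'" "rho y'' y = iv n"
    using rho_factor[OF cH(2) inv_closed _ x y] n sub_carrier by blast
  have "rho y y'' \<in> N" using rho_sub_sym[OF y''(1) y] y''(3) sub_inv_closed n(1) by simp
  then have "paths A B x y = paths A B x y''" by (rule paths_eq_if_sub_right[OF B y y''(1)])
  also have "\<dots> = paths A B x' y'"
    using paths_eq_if_rho_eq[OF quot_carrier_subset[OF A] quot_carrier_subset[OF B] x y''(1) x' y']
      y''(2) by blast
  finally show ?thesis .
qed

definition block_size where
  "block_size = card (block (SOME x. x \<in> X))"

lemma card_block: assumes x: "x \<in> X" shows "card (block x) = block_size"
proof -
  txt \<open>A block is counted by \<open>paths N N x x\<close>, which depends only on \<open>rho x x = e\<close>.\<close>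
  have diag: "card (block x) = paths N N x x" if x: "x \<in> X" for x
  proof -
    have "block x = {w\<in>X. rho x w \<in> N \<and> rho w x \<in> N}"
      unfolding block_def using rho_sub_sym[OF x] by blast
    then show ?thesis unfolding paths_def by simp
  qed
  have s: "(SOME x. x \<in> X) \<in> X" using X_nonempty some_in_eq by blast
  have "rho x x = rho (SOME x. x \<in> X) (SOME x. x \<in> X)" using rho_diag x s by simp
  then have "paths N N x x = paths N N (SOME x. x \<in> X) (SOME x. x \<in> X)"
    using paths_eq_if_rho_eq[OF sub_carrier sub_carrier x x s s] by blast
  then show ?thesis unfolding block_size_def diag[OF x] diag[OF s] .
qed

lemma block_size_pos: "block_size > 0"
proof -
  obtain x where x: "x \<in> X" using X_nonempty by blast
  then have "x \<in> block x" unfolding block_def using rho_sub_refl by simp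
  then have "card (block x) > 0" using finite_block card_gt_0_iff by blast
  then show ?thesis using card_block[OF x] by simp
qed

lemma paths_eq_block_size_mult:
  assumes A: "A \<in> Q" and B: "B \<in> Q" and u: "u \<in> X" and v: "v \<in> X"
  shows "paths A B u v = block_size * rep_paths A B u v"
proof -
  let ?P = "\<lambda>w. rho u w \<in> A \<and> rho w v \<in> B"
  have invariant: "?P w'" if w: "w \<in> X" "w' \<in> X" "?P w" "rho w w' \<in> N" for w w'
    using rho_coset_right[OF A u w(1,2)] rho_coset_left[OF B w(1) v w(2)]
      rho_sub_sym[OF w(1,2)] w(3,4) by blast
  have union: "{w\<in>X. ?P w} = (\<Union>w'\<in>{w\<in>Xq. ?P w}. block w')"
  proof (rule set_eqI, rule iffI)
    fix w assume w: "w \<in> {w\<in>X. ?P w}"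
    have "rep w \<in> Xq" "?P (rep w)" "w \<in> block (rep w)"
      using w invariant[of w "rep w"] rep_in rho_to_rep rho_from_rep unfolding Xq_def block_def by auto
    then show "w \<in> (\<Union>w'\<in>{w\<in>Xq. ?P w}. block w')" by blast
  next
    fix w assume "w \<in> (\<Union>w'\<in>{w\<in>Xq. ?P w}. block w')"
    then show "w \<in> {w\<in>X. ?P w}"
      using invariant Xq_subset unfolding block_def by blast
  qed
  have "paths A B u v = card (\<Union>w'\<in>{w\<in>Xq. ?P w}. block w')"
    unfolding paths_def union ..
  also have "\<dots> = (\<Sum>w'\<in>{w\<in>Xq. ?P w}. card (block w'))"
    by (rule card_UN_disjoint) (use finite_Xq finite_block block_disjoint in auto)
  also have "\<dots> = (\<Sum>w'\<in>{w\<in>Xq. ?P w}. block_size)"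
    using card_block Xq_subset by (intro sum.cong) auto
  also have "\<dots> = block_size * rep_paths A B u v"
    unfolding rep_paths_def by simp
  finally show ?thesis .
qed

lemma rep_paths_eq_if_same_coset:
  assumes "A \<in> Q" "B \<in> Q" "C \<in> Q" "x \<in> X" "y \<in> X" "x' \<in> X" "y' \<in> X"
    "rho x y \<in> C" "rho x' y' \<in> C"
  shows "rep_paths A B x y = rep_paths A B x' y'"
  using paths_eq_if_same_coset[OF assms] paths_eq_block_size_mult[OF assms(1,2,4,5)]
    paths_eq_block_size_mult[OF assms(1,2,6,7)] block_size_pos by simp

lemma coset_rel_paths:
  "u \<in> Xq \<Longrightarrow> v \<in> Xq \<Longrightarrow>
    {w. (u, w) \<in> coset_rel A} \<inter> {w. (v, w) \<in> converse (coset_rel B)}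
      = {w\<in>Xq. rho u w \<in> A \<and> rho w v \<in> B}"
  unfolding coset_rel_def by auto

lemma coset_rel_nonempty:
  assumes A: "A \<in> Q"
  shows "coset_rel A \<noteq> {}"
  using A
proof (rule quot_carrierE)
  fix h assume h: "h \<in> H" "A = coset h"
  obtain x y where xy: "x \<in> X" "y \<in> X" "rho x y = h" using rho_surj h(1) by blast
  have "rho x y \<in> A" using in_coset h xy(3) by auto
  then have "rho (rep x) y \<in> A" using rho_coset_left[OF A xy(1,2) rep_in] rho_from_rep xy by blast
  then have "rho (rep x) (rep y) \<in> A" using rho_coset_right[OF A rep_in xy(2) rep_in] rho_to_rep xy by blast
  then show ?thesis unfolding coset_rel_def Xq_def using xy by blast
qed

lemma coset_rel_inj:
  assumes "A \<in> Q" "B \<in> Q" "(u, v) \<in> coset_rel A" "(u, v) \<in> coset_rel B"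
  shows "A = B"
  using quot_carrier_eq_coset[OF assms(1)] quot_carrier_eq_coset[OF assms(2)] assms(3,4)
  unfolding coset_rel_def by blast

lemma coset_rel_sub_eq_Id: "coset_rel N = Id_on Xq"
  unfolding coset_rel_def Id_on_def using Xq_eq_if_sub rho_sub_refl Xq_subset by auto

lemma converse_coset_rel:
  assumes a: "a \<in> H"
  shows "converse (coset_rel (coset a)) = coset_rel (coset (iv a))"
proof -
  have "rho v u \<in> coset (iv a) \<longleftrightarrow> rho u v \<in> coset a" if "u \<in> Xq" "v \<in> Xq" for u v
  proof -
    have uv: "u \<in> X" "v \<in> X" using that Xq_subset by auto
    show ?thesis using rho_swap[OF uv] inv_coset_iff[OF a rho_mem(1)[OF uv]] by simp
  qed
  then show ?thesis unfolding coset_rel_def by auto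
qed

lemma coset_rel_regular:
  assumes A: "A \<in> Q" and B: "B \<in> Q" and C: "C \<in> Q"
  shows "\<exists>a::nat. \<forall>y\<in>Xq. \<forall>z. (y, z) \<in> coset_rel C \<longrightarrow>
           card ({w. (y, w) \<in> coset_rel A} \<inter> {w. (z, w) \<in> converse (coset_rel B)}) = a"
proof -
  obtain u0 v0 where uv0: "(u0, v0) \<in> coset_rel C" using coset_rel_nonempty C by fast
  have 0: "u0 \<in> Xq" "v0 \<in> Xq" "rho u0 v0 \<in> C" using uv0 unfolding coset_rel_def by auto
  show ?thesis
  proof (intro exI ballI allI impI)
    fix y z assume y: "y \<in> Xq" and yz: "(y, z) \<in> coset_rel C"
    have z: "z \<in> Xq" "rho y z \<in> C" using yz unfolding coset_rel_def by auto
    show "card ({w. (y, w) \<in> coset_rel A} \<inter> {w. (z, w) \<in> converse (coset_rel B)})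
        = rep_paths A B u0 v0"
      unfolding coset_rel_paths[OF y z(1)] rep_paths_def[symmetric]
      by (rule rep_paths_eq_if_same_coset[OF A B C]) (use Xq_subset y z 0 in auto)
  qed
qed

lemma assoc_scheme_quotient: "assoc_scheme Xq Sq"
  unfolding assoc_scheme_def
proof (intro conjI)
  show "{} \<notin> Sq" using coset_rel_nonempty unfolding Sq_def by fastforce
  show "\<Union>Sq = Xq \<times> Xq"
  proof
    show "\<Union>Sq \<subseteq> Xq \<times> Xq" unfolding Sq_def coset_rel_def by auto
    show "Xq \<times> Xq \<subseteq> \<Union>Sq"
    proof (clarify)
      fix u v assume uv: "u \<in> Xq" "v \<in> Xq"
      then have "rho u v \<in> H" using rho_mem Xq_subset by blast
      then have "coset (rho u v) \<in> Q" "(u, v) \<in> coset_rel (coset (rho u v))"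
        using quot_carrierI in_coset uv unfolding coset_rel_def by auto
      then show "(u, v) \<in> \<Union>Sq" unfolding Sq_def by blast
    qed
  qed
  show "\<forall>p\<in>Sq. \<forall>q\<in>Sq. p \<noteq> q \<longrightarrow> p \<inter> q = {}"
  proof (intro ballI impI)
    fix p q assume "p \<in> Sq" "q \<in> Sq" "p \<noteq> q"
    then show "p \<inter> q = {}" unfolding Sq_def using coset_rel_inj by auto
  qed
  show "Id_on Xq \<in> Sq"
    unfolding Sq_def using coset_rel_sub_eq_Id sub_in_quot_carrier by force
  show "\<forall>p\<in>Sq. converse p \<in> Sq"
    unfolding Sq_def using converse_coset_rel quot_carrierI inv_closed
    by (auto elim!: quot_carrierE)
  show "\<forall>p\<in>Sq. \<forall>q\<in>Sq. \<forall>r\<in>Sq. \<exists>a::nat. \<forall>y\<in>Xq. \<forall>z. (y, z) \<in> r \<longrightarrow>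
         card ({w. (y, w) \<in> p} \<inter> {w. (z, w) \<in> converse q}) = a"
  proof (intro ballI)
    fix p q r assume "p \<in> Sq" "q \<in> Sq" "r \<in> Sq"
    then obtain A B C where "A \<in> Q" "B \<in> Q" "C \<in> Q"
      "p = coset_rel A" "q = coset_rel B" "r = coset_rel C"
      unfolding Sq_def by auto
    then show "\<exists>a::nat. \<forall>y\<in>Xq. \<forall>z. (y, z) \<in> r \<longrightarrow>
         card ({w. (y, w) \<in> p} \<inter> {w. (z, w) \<in> converse q}) = a"
      using coset_rel_regular by simp
  qed
qed

lemma int_number_quotient:
  assumes "A \<in> Q" "B \<in> Q" "C \<in> Q" "(u, v) \<in> coset_rel C"
  shows "int_number Xq (coset_rel A) (coset_rel B) (coset_rel C) = rep_paths A B u v"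
proof -
  have uv: "u \<in> Xq" "v \<in> Xq" using assms(4) unfolding coset_rel_def by blast+
  have S: "coset_rel A \<in> Sq" "coset_rel B \<in> Sq" "coset_rel C \<in> Sq"
    using assms(1-3) unfolding Sq_def by blast+
  show ?thesis
    unfolding assoc_scheme_int_number[OF assoc_scheme_quotient S uv(1) assms(4)]
      coset_rel_paths[OF uv] rep_paths_def ..
qed

lemma rep_paths_pos_iff:
  assumes A: "A \<in> Q" and B: "B \<in> Q" and u: "u \<in> Xq" and v: "v \<in> Xq"
  shows "rep_paths A B u v \<ge> 1 \<longleftrightarrow> rho u v \<in> set_mult m A B"
proof
  assume "rep_paths A B u v \<ge> 1"
  then obtain w where w: "w \<in> Xq" "rho u w \<in> A" "rho w v \<in> B" unfolding rep_paths_def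
    by (metis (no_types, lifting) card.empty empty_Collect_eq not_one_le_zero)
  have "rho u v \<in> m (rho u w) (rho w v)" using rho_mult Xq_subset u v w(1) by blast
  then show "rho u v \<in> set_mult m A B" using w by (auto simp: set_mult_iff)
next
  assume "rho u v \<in> set_mult m A B"
  then obtain a b where ab: "a \<in> A" "b \<in> B" "rho u v \<in> m a b" by (auto simp: set_mult_iff)
  have uX: "u \<in> X" "v \<in> X" using u v Xq_subset by auto
  obtain w where w: "w \<in> X" "rho u w = a" "rho w v = b"
    using rho_factor[OF _ _ ab(3) uX] ab quot_carrier_subset A B by blast
  have "rho u (rep w) \<in> A" using rho_coset_right[OF A uX(1) w(1) rep_in[OF w(1)]] rho_to_rep w ab by auto
  moreover have "rho (rep w) v \<in> B" using rho_coset_left[OF B w(1) uX(2) rep_in[OF w(1)]] rho_from_rep w ab by auto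
  moreover have "rep w \<in> Xq" using w Xq_def by auto
  ultimately have "{w\<in>Xq. rho u w \<in> A \<and> rho w v \<in> B} \<noteq> {}" by blast
  then show "rep_paths A B u v \<ge> 1" unfolding rep_paths_def using finite_Xq
    by (simp add: Suc_le_eq card_gt_0_iff)
qed

lemma set_mult_coset_closed:
  assumes A: "A \<in> Q" and B: "B \<in> Q" and c: "c \<in> set_mult m A B" and c': "c' \<in> coset c"
  shows "c' \<in> set_mult m A B"
  using B
proof (rule quot_carrierE)
  fix b assume b: "b \<in> H" "B = coset b"
  obtain n where n: "n \<in> N" "c' \<in> m c n" using c' by (auto simp: set_mult_iff)
  have "c' \<in> set_mult m (set_mult m A B) N" using c n set_mult_iff[of c' m] by blast
  also have "\<dots> = set_mult m A (set_mult m B N)"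
    using set_mult_assoc[OF quot_carrier_subset[OF A] quot_carrier_subset[OF B] sub_carrier] .
  also have "\<dots> \<subseteq> set_mult m A B"
    using set_mult_mono[OF subset_refl coset_mult_sub[OF b(1)]] b(2) by simp
  finally show ?thesis .
qed

lemma coset_rel_in_scheme_mult_iff:
  assumes A: "A \<in> Q" and B: "B \<in> Q" and C: "C \<in> Q"
  shows "coset_rel C \<in> scheme_mult Xq Sq (coset_rel A) (coset_rel B) \<longleftrightarrow> C \<subseteq> set_mult m A B"
proof -
  obtain u v where uv: "(u, v) \<in> coset_rel C" using coset_rel_nonempty C by fast
  have uv': "u \<in> Xq" "v \<in> Xq" "rho u v \<in> C" using uv coset_rel_def by auto
  have "coset_rel C \<in> scheme_mult Xq Sq (coset_rel A) (coset_rel B) \<longleftrightarrow> rho u v \<in> set_mult m A B"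
    using int_number_quotient[OF A B C uv] rep_paths_pos_iff[OF A B uv'(1,2)] C
    unfolding scheme_mult_def Sq_def by auto
  also have "\<dots> \<longleftrightarrow> C \<subseteq> set_mult m A B"
    using quot_carrier_eq_coset[OF C uv'(3)] set_mult_coset_closed[OF A B] uv'(3) by blast
  finally show ?thesis .
qed

lemma quotient_iso: "hg_iso Q (quot_mult m N) Sq (scheme_mult Xq Sq) coset_rel"
  unfolding hg_iso_def
proof (intro conjI ballI)
  have "inj_on coset_rel Q"
  proof (rule inj_onI)
    fix A B assume A: "A \<in> Q" and B: "B \<in> Q" and eq: "coset_rel A = coset_rel B"
    obtain u v where "(u, v) \<in> coset_rel A" using coset_rel_nonempty[OF A] by fast
    then show "A = B" using coset_rel_inj[OF A B] eq by simp
  qed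
  then show "bij_betw coset_rel Q Sq" unfolding bij_betw_def Sq_def by simp
  fix A B assume A: "A \<in> Q" and B: "B \<in> Q"
  show "coset_rel ` quot_mult m N A B = scheme_mult Xq Sq (coset_rel A) (coset_rel B)"
  proof
    show "coset_rel ` quot_mult m N A B \<subseteq> scheme_mult Xq Sq (coset_rel A) (coset_rel B)"
    proof
      fix r assume "r \<in> coset_rel ` quot_mult m N A B"
      then obtain c where c: "c \<in> set_mult m A B" "r = coset_rel (coset c)"
        unfolding quot_mult_def by auto
      have C: "coset c \<in> Q"
        using quot_carrierI set_mult_closed quot_carrier_subset A B c(1) by blast
      show "r \<in> scheme_mult Xq Sq (coset_rel A) (coset_rel B)"
        using coset_rel_in_scheme_mult_iff[OF A B C] set_mult_coset_closed[OF A B c(1)] c(2)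
        by blast
    qed
    show "scheme_mult Xq Sq (coset_rel A) (coset_rel B) \<subseteq> coset_rel ` quot_mult m N A B"
    proof
      fix r assume r: "r \<in> scheme_mult Xq Sq (coset_rel A) (coset_rel B)"
      then obtain C where C: "C \<in> Q" "r = coset_rel C"
        unfolding scheme_mult_def Sq_def by auto
      obtain c where c: "c \<in> H" "C = coset c" using C(1) by (rule quot_carrierE)
      have "c \<in> set_mult m A B"
        using coset_rel_in_scheme_mult_iff[OF A B C(1)] r C(2) c in_coset by blast
      then show "r \<in> coset_rel ` quot_mult m N A B"
        unfolding quot_mult_def using C(2) c(2) by blast
    qed
  qed
qed

end

theorem proposition4p7:
  fixes H :: "'a set" and m :: "'a \<Rightarrow> 'a \<Rightarrow> 'a set" and e :: 'a and iv :: "'a \<Rightarrow> 'a"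
    and N :: "'a set"
  assumes "hypergroup H m e iv"
    and "finitely_realizable H m"
    and "normal_sub_hypergroup H m iv N"
  shows "finitely_realizable (quot_carrier H m N) (quot_mult m N)"
proof -
  obtain X :: "nat set" and S f where "finite X" "assoc_scheme X S" "hg_iso H m S (scheme_mult X S) f"
    using assms(2) unfolding finitely_realizable_def by blast
  then interpret realized_quotient H m e iv X S f N
    using assms(1,3) by unfold_locales
  show ?thesis
    unfolding finitely_realizable_def
    using finite_Xq Xq_nonempty assoc_scheme_quotient quotient_iso by blast
qed

end
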